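(* Let $D\subset\mathbb{C}^n$ be a piecewise smooth complete circular domain such that for each $\zeta\in bD$, the radial line from $0$ to $\zeta$ meets each face of $bD$ which passes through $\zeta$ transversally. Then the standard and the radial boundary distances on $D$ are comparable: there is a constant $C>1$ such that $\rho(w)\le C\,d(w)$ for all $w\in D$.
   Context: A piecewise smooth domain is an intersection $D=\bigcap_{j=1}^N D_j$ of finitely many bounded domains with $\mathcal{C}^\infty$-smooth boundary in which all boundary intersections are transverse. A face of $bD$ is a connected component of the set of boundary points lying on exactly one of the $bD_j$. $D$ is complete circular if $\lambda z\in D$ for all $z\in D$ and $|\lambda|\le1$. For $w\in D$, $d(w)=\mathrm{dist}(w,bD)$ is the standard boundary distance, and the radial boundary distance is $\rho(w)=|w^*-w|$, where $w^*$ is the unique point of $bD$ collinear with $0$ and $w$ on the ray from $0$ through $w$. *)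

theory Defs
  imports "HOL-Analysis.Analysis"
begin

fun iter_dderiv :: "('a::real_normed_vector \<Rightarrow> real) \<Rightarrow> 'a list \<Rightarrow> 'a \<Rightarrow> real" where
  "iter_dderiv f [] = f"
| "iter_dderiv f (v # vs) = (\<lambda>z. frechet_derivative (iter_dderiv f vs) (at z) v)"

definition smooth_inf :: "('a::real_normed_vector \<Rightarrow> real) \<Rightarrow> bool" where
  "smooth_inf f \<longleftrightarrow> (\<forall>vs z. iter_dderiv f vs differentiable (at z))"

definition grad :: "('a::euclidean_space \<Rightarrow> real) \<Rightarrow> 'a \<Rightarrow> 'a" where
  "grad f z = (\<Sum>b\<in>Basis. frechet_derivative f (at z) b *\<^sub>R b)"

definition smooth_bdry_domain :: "('a::euclidean_space) set \<Rightarrow> ('a \<Rightarrow> real) \<Rightarrow> bool" where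
  "smooth_bdry_domain U r \<longleftrightarrow> U = {z. r z < 0} \<and> bounded U \<and> connected U \<and> U \<noteq> {}
     \<and> smooth_inf r \<and> (\<forall>z. r z = 0 \<longrightarrow> grad r z \<noteq> 0)"

definition piecewise_smooth_domain ::
  "('a::euclidean_space) set \<Rightarrow> nat \<Rightarrow> (nat \<Rightarrow> 'a set) \<Rightarrow> (nat \<Rightarrow> 'a \<Rightarrow> real) \<Rightarrow> bool" where
  "piecewise_smooth_domain D N Ds r \<longleftrightarrow> 0 < N \<and> D = (\<Inter>j<N. Ds j)
     \<and> (\<forall>j<N. smooth_bdry_domain (Ds j) (r j))
     \<and> (\<forall>z J c. J \<subseteq> {..<N} \<and> (\<forall>j\<in>J. z \<in> frontier (Ds j))
            \<and> (\<Sum>j\<in>J. c j *\<^sub>R grad (r j) z) = 0 \<longrightarrow> (\<forall>j\<in>J. c j = 0))"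

definition one_face_pts :: "('a::euclidean_space) set \<Rightarrow> nat \<Rightarrow> (nat \<Rightarrow> 'a set) \<Rightarrow> 'a set" where
  "one_face_pts D N Ds = {z \<in> frontier D. card {j. j < N \<and> z \<in> frontier (Ds j)} = 1}"

definition is_face :: "('a::euclidean_space) set \<Rightarrow> nat \<Rightarrow> (nat \<Rightarrow> 'a set) \<Rightarrow> 'a set \<Rightarrow> bool" where
  "is_face D N Ds F \<longleftrightarrow> (\<exists>x\<in>one_face_pts D N Ds. F = connected_component_set (one_face_pts D N Ds) x)"

definition complete_circular :: "(complex ^ 'n) set \<Rightarrow> bool" where
  "complete_circular D \<longleftrightarrow> (\<forall>z\<in>D. \<forall>c::complex. cmod c \<le> 1 \<longrightarrow> c *s z \<in> D)"

definition bdist :: "('a::euclidean_space) set \<Rightarrow> 'a \<Rightarrow> real" where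
  "bdist D w = infdist w (frontier D)"

text \<open>Radial boundary distance rho(w) = |w* - w|, w* the unique point of bD on the
  ray from 0 through w (w nonzero).\<close>
definition radial_bdist :: "('a::euclidean_space) set \<Rightarrow> 'a \<Rightarrow> real" where
  "radial_bdist D w = norm ((THE z. z \<in> frontier D \<and> (\<exists>t>0. z = t *\<^sub>R w)) - w)"

end

theory Submission
  imports Defs
begin

text \<open>If \<open>r\<^sub>j(\<zeta>) = 0\<close> at \<open>\<zeta> \<in> bD\<close>, independence of the
  active gradients gives, by an implicit-function argument, a curve in \<open>bD\<^sub>j\<close> off all other
  \<open>bD\<^sub>i\<close> ending at \<open>\<zeta>\<close>; so \<open>\<zeta>\<close> lies in the closure of a face in \<open>bD\<^sub>j\<close>, and transversality together
  with star-shapedness gives \<open>dr\<^sub>j(\<zeta>) \<zeta> > 0\<close>.  Hence \<open>r\<^sub>j\<close> decreases at a definite rate along the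
  ray from \<open>\<zeta>\<close> to \<open>0\<close>, and a cone \<open>{y. |y - (1 - s) \<zeta>| < e s, 0 < s \<le> e}\<close> lies in \<open>D\<close>, with \<open>e\<close>
  independent of \<open>\<zeta>\<close> by compactness of \<open>bD\<close>.  Using the ball about \<open>0\<close>, the ball of radius \<open>c s\<close>
  about \<open>(1 - s) \<zeta>\<close> lies in \<open>D\<close> for all \<open>0 < s < 1\<close>.  Writing \<open>w = (1 - s) w\<^sup>*\<close>, we get
  \<open>\<rho>(w) = s |w\<^sup>*| \<le> s R \<le> (R / c) d(w)\<close>.\<close>

section \<open>\<open>C\<^sup>1\<close> functions\<close>

lemma linear_abs_le_norm_sum_Basis:
  fixes L :: "'a::euclidean_space \<Rightarrow> real"
  assumes "linear L"
  shows "\<bar>L v\<bar> \<le> norm v * (\<Sum>b\<in>Basis. \<bar>L b\<bar>)"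
proof -
  have "L v = (\<Sum>b\<in>Basis. (v \<bullet> b) * L b)"
    using assms by (subst euclidean_representation[symmetric, of v]) (simp add: linear_sum linear_scale)
  also have "\<bar>\<dots>\<bar> \<le> (\<Sum>b\<in>Basis. \<bar>v \<bullet> b\<bar> * \<bar>L b\<bar>)"
    unfolding abs_mult[symmetric] by (rule sum_abs)
  also have "\<dots> \<le> (\<Sum>b\<in>Basis. norm v * \<bar>L b\<bar>)"
    by (intro sum_mono mult_right_mono) (auto simp: Basis_le_norm)
  finally show ?thesis by (simp add: sum_distrib_left)
qed

definition C1_function :: "('a::euclidean_space \<Rightarrow> real) \<Rightarrow> bool" where
  "C1_function f \<longleftrightarrow> (\<forall>z. f differentiable (at z))
     \<and> (\<forall>v. continuous_on UNIV (\<lambda>z. frechet_derivative f (at z) v))"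

lemma smooth_inf_imp_C1_function: "smooth_inf f \<Longrightarrow> C1_function f"
proof -
  assume s: "smooth_inf f"
  have "iter_dderiv f [] differentiable (at z)" "iter_dderiv f [v] differentiable (at z)" for v z
    using s unfolding smooth_inf_def by blast+
  then show ?thesis unfolding C1_function_def
    by (auto intro!: continuous_at_imp_continuous_on differentiable_imp_continuous_within)
qed

context
  fixes f :: "'a::euclidean_space \<Rightarrow> real"
  assumes f: "C1_function f"
begin

lemma C1_function_has_derivative: "(f has_derivative frechet_derivative f (at z)) (at z)"
  using f frechet_derivative_works unfolding C1_function_def by blast

lemma C1_function_linear_derivative: "linear (frechet_derivative f (at z))"
  using f linear_frechet_derivative unfolding C1_function_def by blast

lemma C1_function_continuous: "continuous_on UNIV f"
  using f unfolding C1_function_def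
  by (auto intro!: continuous_at_imp_continuous_on differentiable_imp_continuous_within)

lemma C1_function_isCont: "isCont f z"
  using C1_function_continuous by (simp add: continuous_on_eq_continuous_at)

lemma C1_function_derivative_eq_grad: "frechet_derivative f (at z) v = grad f z \<bullet> v"
proof -
  have "frechet_derivative f (at z) v = (\<Sum>b\<in>Basis. (v \<bullet> b) * frechet_derivative f (at z) b)"
    using C1_function_linear_derivative
    by (subst euclidean_representation[symmetric, of v]) (simp add: linear_sum linear_scale)
  also have "\<dots> = grad f z \<bullet> v"
    by (simp add: grad_def inner_sum_left inner_sum_right mult.commute inner_commute)
  finally show ?thesis .
qed

lemma C1_function_has_real_derivative_line:
  "((\<lambda>t. f (x + t *\<^sub>R v)) has_real_derivative frechet_derivative f (at (x + t *\<^sub>R v)) v) (at t)"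
proof -
  have "((\<lambda>t. x + t *\<^sub>R v) has_derivative (\<lambda>h. h *\<^sub>R v)) (at t)"
    by (auto intro!: derivative_eq_intros)
  from diff_chain_at[OF this C1_function_has_derivative]
  have "((\<lambda>t. f (x + t *\<^sub>R v)) has_derivative
          (\<lambda>h. frechet_derivative f (at (x + t *\<^sub>R v)) (h *\<^sub>R v))) (at t)"
    by (simp add: o_def)
  then show ?thesis
    using C1_function_linear_derivative
    by (auto simp: linear_scale mult.commute intro!: has_derivative_imp_has_field_derivative)
qed

lemma C1_function_strict_derivative:
  assumes "\<epsilon> > 0"
  obtains \<delta> where "\<delta> > 0" "\<And>x y. x \<in> ball z \<delta> \<Longrightarrow> y \<in> ball z \<delta> \<Longrightarrow>
           \<bar>f y - f x - frechet_derivative f (at z) (y - x)\<bar> \<le> \<epsilon> * norm (y - x)"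
proof -
  let ?D = "\<lambda>\<xi>. frechet_derivative f (at \<xi>)"
  define g where "g \<xi> = (\<Sum>b\<in>Basis. \<bar>?D \<xi> b - ?D z b\<bar>)" for \<xi>
  have "continuous_on UNIV g"
    using f unfolding g_def C1_function_def by (intro continuous_intros) auto
  then have "isCont g z" by (simp add: continuous_on_eq_continuous_at)
  moreover have "g z = 0" by (simp add: g_def)
  ultimately obtain \<delta> where \<delta>: "\<delta> > 0" "\<And>\<xi>. dist \<xi> z < \<delta> \<Longrightarrow> g \<xi> < \<epsilon>"
    using assms unfolding continuous_at_eps_delta by (metis dist_real_def diff_zero abs_less_iff)
  have "\<bar>f y - f x - ?D z (y - x)\<bar> \<le> \<epsilon> * norm (y - x)" if x: "x \<in> ball z \<delta>" and y: "y \<in> ball z \<delta>" for x y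
  proof -
    obtain t where t: "0 < t" "t < 1" "f y - f x = ?D (x + t *\<^sub>R (y - x)) (y - x)"
      using MVT2[of 0 1 "\<lambda>t. f (x + t *\<^sub>R (y - x))" "\<lambda>t. ?D (x + t *\<^sub>R (y - x)) (y - x)"]
        C1_function_has_real_derivative_line by auto
    define \<xi> where "\<xi> = x + t *\<^sub>R (y - x)"
    have "\<xi> = (1 - t) *\<^sub>R x + t *\<^sub>R y" by (simp add: \<xi>_def algebra_simps)
    then have "\<xi> \<in> ball z \<delta>" using convexD[OF convex_ball x y, of "1 - t" t] t by auto
    then have "g \<xi> < \<epsilon>" using \<delta>(2) by (simp add: dist_commute)
    have "linear (\<lambda>v. ?D \<xi> v - ?D z v)"
      by (intro linear_compose_sub C1_function_linear_derivative)
    then have "\<bar>?D \<xi> (y - x) - ?D z (y - x)\<bar> \<le> norm (y - x) * g \<xi>"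
      using linear_abs_le_norm_sum_Basis by (fastforce simp: g_def)
    also have "\<dots> \<le> \<epsilon> * norm (y - x)"
      using \<open>g \<xi> < \<epsilon>\<close> by (simp add: mult.commute mult_right_mono)
    finally show ?thesis using t(3) by (simp add: \<xi>_def)
  qed
  with \<delta>(1) show ?thesis using that by blast
qed

end

lemma C1_function_zero_in_closure_negative:
  assumes f: "C1_function f" and "f z = 0" "grad f z \<noteq> 0"
  shows "z \<in> closure {x. f x < 0}"
  unfolding closure_approachable
proof (intro allI impI)
  fix e :: real assume "e > 0"
  define g where "g = grad f z"
  have "frechet_derivative f (at (z + 0 *\<^sub>R g)) g > 0"
    using C1_function_derivative_eq_grad[OF f] \<open>grad f z \<noteq> 0\<close> by (simp add: g_def)
  then obtain d where d: "d > 0" "\<And>h. h > 0 \<Longrightarrow> h < d \<Longrightarrow> f (z + (0 - h) *\<^sub>R g) < f (z + 0 *\<^sub>R g)"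
    using DERIV_pos_inc_left[OF C1_function_has_real_derivative_line[OF f]] by blast
  define h where "h = min (d / 2) (e / (2 * norm g))"
  have h: "h > 0" "h < d" "h * norm g < e"
    using d \<open>e > 0\<close> \<open>grad f z \<noteq> 0\<close> by (auto simp: h_def g_def min_def field_simps)
  have "f (z - h *\<^sub>R g) < 0" using d(2)[OF h(1,2)] \<open>f z = 0\<close> by simp
  moreover have "dist (z - h *\<^sub>R g) z < e" using h by (simp add: dist_norm)
  ultimately show "\<exists>y\<in>{x. f x < 0}. dist y z < e" by blast
qed

section \<open>Dual vectors\<close>

lemma inj_on_if_scalars_zero:
  fixes g :: "'i \<Rightarrow> 'a::real_vector"
  assumes "finite J" and "\<And>c. (\<Sum>i\<in>J. c i *\<^sub>R g i) = 0 \<Longrightarrow> \<forall>i\<in>J. c i = 0"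
  shows "inj_on g J"
proof (rule inj_onI, rule ccontr)
  fix a b assume a: "a \<in> J" and b: "b \<in> J" and eq: "g a = g b" and "a \<noteq> b"
  define c where "c i = (if i = a then 1 else 0) - (if i = b then 1 else (0::real))" for i
  have "(\<Sum>i\<in>J. c i *\<^sub>R g i) = (\<Sum>i\<in>J. if i = a then g i else 0) - (\<Sum>i\<in>J. if i = b then g i else 0)"
    unfolding sum_subtractf[symmetric] by (intro sum.cong) (auto simp: c_def)
  also have "\<dots> = 0" using a b \<open>finite J\<close> eq by simp
  finally show False using assms(2) a \<open>a \<noteq> b\<close> by (force simp: c_def)
qed

text \<open>Take the component of \<open>g k\<close> orthogonal to the span of the other \<open>g i\<close>; it is nonzero
  by independence.\<close>
lemma exists_dual_vector:
  fixes g :: "'i \<Rightarrow> 'a::euclidean_space"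
  assumes fin: "finite J" and ind: "\<And>c. (\<Sum>i\<in>J. c i *\<^sub>R g i) = 0 \<Longrightarrow> \<forall>i\<in>J. c i = 0"
    and k: "k \<in> J"
  obtains u where "\<And>i. i \<in> J \<Longrightarrow> g i \<bullet> u = (if i = k then 1 else 0)"
proof -
  define S where "S = g ` (J - {k})"
  obtain y z where y: "y \<in> span S" and z: "\<And>w. w \<in> span S \<Longrightarrow> orthogonal z w"
    and gk: "g k = y + z"
    using orthogonal_subspace_decomp_exists[of S "g k"] by blast
  have "z \<noteq> 0"
  proof
    assume "z = 0"
    have "finite S" using fin by (simp add: S_def)
    then obtain u where u: "y = (\<Sum>w\<in>S. u w *\<^sub>R w)" using y span_finite by blast
    have "inj_on g (J - {k})"
      using inj_on_if_scalars_zero[OF fin ind] by (rule inj_on_subset) auto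
    then have y_sum: "y = (\<Sum>i\<in>J - {k}. u (g i) *\<^sub>R g i)"
      using u unfolding S_def by (simp add: sum.reindex)
    define c where "c i = (if i = k then 1 else - u (g i))" for i
    have "(\<Sum>i\<in>J. c i *\<^sub>R g i) = g k + (\<Sum>i\<in>J - {k}. - (u (g i) *\<^sub>R g i))"
      using fin k by (simp add: sum.remove c_def)
    also have "\<dots> = 0" using y_sum gk \<open>z = 0\<close> by (simp add: sum_negf)
    finally show False using ind k by (force simp: c_def)
  qed
  have "g i \<bullet> z = 0" if "i \<in> J" "i \<noteq> k" for i
  proof -
    have "g i \<in> span S" using that unfolding S_def by (intro span_base) auto
    then show ?thesis using z by (metis orthogonal_def inner_commute)
  qed
  moreover have "g k \<bullet> z = z \<bullet> z"
    using z[OF y] gk by (simp add: orthogonal_def inner_add_left inner_commute[of y z])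
  ultimately show ?thesis
    using \<open>z \<noteq> 0\<close> by (intro that[of "(1 / (z \<bullet> z)) *\<^sub>R z"]) auto
qed

lemma exists_vector_inner_eq:
  fixes g :: "'i \<Rightarrow> 'a::euclidean_space"
  assumes fin: "finite J" and ind: "\<And>c. (\<Sum>i\<in>J. c i *\<^sub>R g i) = 0 \<Longrightarrow> \<forall>i\<in>J. c i = 0"
  obtains v where "\<And>i. i \<in> J \<Longrightarrow> g i \<bullet> v = t i"
proof -
  obtain u where u: "\<And>k i. k \<in> J \<Longrightarrow> i \<in> J \<Longrightarrow> g i \<bullet> u k = (if i = k then 1 else 0)"
    using exists_dual_vector[OF fin ind] by metis
  have "g i \<bullet> (\<Sum>k\<in>J. t k *\<^sub>R u k) = t i" if "i \<in> J" for i
  proof -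
    have "g i \<bullet> (\<Sum>k\<in>J. t k *\<^sub>R u k) = (\<Sum>k\<in>J. t k * (if i = k then 1 else 0))"
      using u that by (simp add: inner_sum_right)
    also have "\<dots> = t i" using fin that by (simp add: if_distrib cong: if_cong)
    finally show ?thesis .
  qed
  then show ?thesis by (rule that)
qed

section \<open>Real-variable estimates\<close>

lemma continuous_on_implicit_zero:
  fixes \<phi> :: "real \<Rightarrow> real \<Rightarrow> real"
  assumes mono: "\<And>s \<tau>1 \<tau>2. s \<in> S \<Longrightarrow> \<tau>1 \<in> {a..b} \<Longrightarrow> \<tau>2 \<in> {a..b} \<Longrightarrow> \<tau>1 < \<tau>2
                     \<Longrightarrow> \<phi> s \<tau>1 < \<phi> s \<tau>2"
    and cont: "\<And>\<tau>. continuous_on S (\<lambda>s. \<phi> s \<tau>)"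
    and zero: "\<And>s. s \<in> S \<Longrightarrow> \<tau> s \<in> {a<..<b} \<and> \<phi> s (\<tau> s) = 0"
  shows "continuous_on S \<tau>"
  unfolding continuous_on_iff
proof (intro ballI allI impI)
  fix s0 e :: real assume s0: "s0 \<in> S" and "e > 0"
  define t0 where "t0 = \<tau> s0"
  define e' where "e' = min e (min (t0 - a) (b - t0))"
  have e': "e' > 0" "e' \<le> e" "t0 - e' \<in> {a..b}" "t0 + e' \<in> {a..b}" "t0 \<in> {a..b}"
    using \<open>e > 0\<close> zero[OF s0] by (auto simp: e'_def t0_def)
  have "\<phi> s0 t0 = 0" using zero[OF s0] by (simp add: t0_def)
  then have pos: "\<phi> s0 (t0 + e') > 0" and neg: "\<phi> s0 (t0 - e') < 0"
    using mono[OF s0 e'(5,4)] mono[OF s0 e'(3,5)] e'(1) by auto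
  have "\<forall>\<^sub>F s in at s0 within S. \<phi> s (t0 + e') > 0 \<and> \<phi> s (t0 - e') < 0"
  proof (rule eventually_conj)
    have "((\<lambda>s. \<phi> s \<tau>') \<longlongrightarrow> \<phi> s0 \<tau>') (at s0 within S)" for \<tau>'
      using cont[of \<tau>'] s0 by (simp add: continuous_on_def)
    then show "\<forall>\<^sub>F s in at s0 within S. \<phi> s (t0 + e') > 0" "\<forall>\<^sub>F s in at s0 within S. \<phi> s (t0 - e') < 0"
      using order_tendstoD(1)[OF _ pos] order_tendstoD(2)[OF _ neg] by blast+
  qed
  then obtain d where "d > 0" and d:
    "\<forall>s\<in>S. s \<noteq> s0 \<and> dist s s0 < d \<longrightarrow> \<phi> s (t0 + e') > 0 \<and> \<phi> s (t0 - e') < 0"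
    unfolding eventually_at by (elim exE conjE) (rule that)
  have "dist (\<tau> s) (\<tau> s0) < e" if "s \<in> S" "dist s s0 < d" for s
  proof (cases "s = s0")
    case False
    then have \<phi>: "\<phi> s (t0 + e') > 0" "\<phi> s (t0 - e') < 0" using d that by auto
    have \<tau>: "\<tau> s \<in> {a..b}" "\<phi> s (\<tau> s) = 0" using zero[OF \<open>s \<in> S\<close>] by auto
    have "\<not> \<tau> s \<ge> t0 + e'"
      using \<phi>(1) mono[OF that(1) e'(4) \<tau>(1)] \<tau>(2) by (cases "\<tau> s = t0 + e'") auto
    moreover have "\<not> \<tau> s \<le> t0 - e'"
      using \<phi>(2) mono[OF that(1) \<tau>(1) e'(3)] \<tau>(2) by (cases "\<tau> s = t0 - e'") auto
    ultimately show ?thesis using e' by (simp add: dist_real_def t0_def abs_less_iff)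
  qed (use \<open>e > 0\<close> in simp)
  then show "\<exists>d>0. \<forall>s\<in>S. dist s s0 < d \<longrightarrow> dist (\<tau> s) (\<tau> s0) < e"
    using \<open>d > 0\<close> by blast
qed

lemma ball_subset_imp_le_infdist_frontier:
  assumes "ball w \<rho> \<subseteq> S" "frontier S \<noteq> {}"
  shows "\<rho> \<le> infdist w (frontier S)"
  unfolding infdist_notempty[OF assms(2)]
proof (rule cINF_greatest[OF assms(2)])
  fix k assume "k \<in> frontier S"
  then have "k \<notin> ball w \<rho>"
    using interior_maximal[OF assms(1) open_ball] by (auto simp: frontier_def)
  then show "\<rho> \<le> dist w k" by simp
qed

text \<open>Near \<open>x\<close> rescale the ball about \<open>x\<close>; near \<open>0\<close> the ball about \<open>0\<close> suffices.\<close>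
lemma starlike_ball_segment:
  fixes S :: "'a::real_normed_vector set"
  assumes star: "\<And>z t. z \<in> S \<Longrightarrow> 0 \<le> t \<Longrightarrow> t \<le> 1 \<Longrightarrow> t *\<^sub>R z \<in> S"
    and S0: "ball 0 r0 \<subseteq> S" and Sx: "ball x \<rho> \<subseteq> S" and x: "norm x \<le> R"
    and pos: "0 < \<rho>" "0 \<le> R" and l: "0 < l" "l \<le> 1"
  shows "ball (l *\<^sub>R x) (r0 * \<rho> / (\<rho> + R)) \<subseteq> S"
proof
  fix y assume "y \<in> ball (l *\<^sub>R x) (r0 * \<rho> / (\<rho> + R))"
  then have y: "dist (l *\<^sub>R x) y < r0 * \<rho> / (\<rho> + R)" by simp
  show "y \<in> S"
  proof (cases "l \<ge> r0 / (\<rho> + R)")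
    case True
    then have "r0 * \<rho> / (\<rho> + R) \<le> l * \<rho>"
      using pos by (metis mult.commute mult_right_mono times_divide_eq_right less_imp_le)
    moreover have "dist (l *\<^sub>R x) y = l * dist x ((1 / l) *\<^sub>R y)"
    proof -
      have "l *\<^sub>R x - y = l *\<^sub>R (x - (1 / l) *\<^sub>R y)" using l by (simp add: algebra_simps)
      then show ?thesis using l by (simp add: dist_norm)
    qed
    ultimately have "l * dist x ((1 / l) *\<^sub>R y) < l * \<rho>" using y by linarith
    then have "dist x ((1 / l) *\<^sub>R y) < \<rho>" using l by simp
    then have "(1 / l) *\<^sub>R y \<in> S" using Sx by auto
    then show ?thesis using star[of "(1 / l) *\<^sub>R y" l] l by simp
  next
    case False
    then have "l * R \<le> r0 / (\<rho> + R) * R" using pos by (intro mult_right_mono) auto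
    moreover have "r0 / (\<rho> + R) * R + r0 * \<rho> / (\<rho> + R) = r0"
    proof -
      have "r0 / (\<rho> + R) * R + r0 * \<rho> / (\<rho> + R) = r0 * (\<rho> + R) / (\<rho> + R)"
        by (simp add: add_divide_distrib distrib_left mult.commute)
      then show ?thesis using pos by simp
    qed
    moreover have "norm y \<le> l * norm x + dist (l *\<^sub>R x) y"
      using norm_triangle_sub[of y "l *\<^sub>R x"] l by (simp add: dist_norm norm_minus_commute)
    moreover have "l * norm x \<le> l * R" using x l by simp
    ultimately have "norm y < r0" using y by linarith
    then show ?thesis using S0 by auto
  qed
qed

lemma cone_point_bounds:
  fixes \<zeta> \<zeta>0 y :: "'a::real_normed_vector"
  assumes e: "0 < e" "e \<le> 1" and \<zeta>: "dist \<zeta> \<zeta>0 < e" and s: "0 < s" "s \<le> e"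
    and y: "y \<in> ball ((1 - s) *\<^sub>R \<zeta>) (e * s)"
  shows "norm (y - \<zeta>) \<le> s * (norm \<zeta>0 + 2)" "dist y \<zeta>0 < e * (norm \<zeta>0 + 3)"
proof -
  have "norm \<zeta> \<le> norm \<zeta>0 + 1"
    using \<zeta> e norm_triangle_ineq2[of \<zeta> \<zeta>0] by (simp add: dist_norm)
  then have "s * norm \<zeta> \<le> s * (norm \<zeta>0 + 1)" using s by (simp add: mult_left_mono)
  moreover have "e * s \<le> s" using e s by (simp add: mult_left_le_one_le)
  moreover have "norm (y - \<zeta>) \<le> norm (y - (1 - s) *\<^sub>R \<zeta>) + s * norm \<zeta>"
    using norm_triangle_ineq4[of "y - (1 - s) *\<^sub>R \<zeta>" "s *\<^sub>R \<zeta>"] s by (simp add: algebra_simps)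
  moreover have "norm (y - (1 - s) *\<^sub>R \<zeta>) < e * s" using y by (simp add: dist_norm norm_minus_commute)
  ultimately show yz: "norm (y - \<zeta>) \<le> s * (norm \<zeta>0 + 2)" by (simp add: algebra_simps)
  have "s * (norm \<zeta>0 + 2) \<le> e * (norm \<zeta>0 + 2)" using s by (simp add: mult_right_mono)
  moreover have "dist y \<zeta>0 \<le> norm (y - \<zeta>) + dist \<zeta> \<zeta>0"
    by (metis dist_norm dist_triangle)
  ultimately show "dist y \<zeta>0 < e * (norm \<zeta>0 + 3)" using yz \<zeta> e by (simp add: algebra_simps)
qed

lemma linear_bound_in_cone:
  fixes Dr :: "'a::real_normed_vector \<Rightarrow> real"
  assumes "linear Dr" and L: "\<And>w. \<bar>Dr w\<bar> \<le> L * norm w" and "L \<ge> 0" "s > 0"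
    and y: "y \<in> ball ((1 - s) *\<^sub>R \<zeta>) (e * s)" and \<zeta>: "dist \<zeta> \<zeta>0 < e"
  shows "Dr (y - \<zeta>) \<le> 2 * (s * (e * L)) - s * Dr \<zeta>0"
proof -
  have "Dr (y - \<zeta>) = Dr ((y - (1 - s) *\<^sub>R \<zeta>) - s *\<^sub>R \<zeta>0 - s *\<^sub>R (\<zeta> - \<zeta>0))"
    by (rule arg_cong[where f = Dr]) (simp add: algebra_simps)
  then have "Dr (y - \<zeta>) = Dr (y - (1 - s) *\<^sub>R \<zeta>) - s * Dr \<zeta>0 - s * Dr (\<zeta> - \<zeta>0)"
    using \<open>linear Dr\<close> by (simp add: linear_diff linear_scale)
  moreover have "Dr (y - (1 - s) *\<^sub>R \<zeta>) \<le> s * (e * L)"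
  proof -
    have "Dr (y - (1 - s) *\<^sub>R \<zeta>) \<le> L * norm (y - (1 - s) *\<^sub>R \<zeta>)"
      using L[of "y - (1 - s) *\<^sub>R \<zeta>"] by simp
    also have "\<dots> \<le> L * (e * s)"
      using y \<open>L \<ge> 0\<close> by (intro mult_left_mono) (auto simp: dist_norm norm_minus_commute)
    finally show ?thesis by (simp only: mult_ac)
  qed
  moreover have "- (s * Dr (\<zeta> - \<zeta>0)) \<le> s * (e * L)"
  proof -
    have "- Dr (\<zeta> - \<zeta>0) \<le> L * norm (\<zeta> - \<zeta>0)" using L[of "\<zeta> - \<zeta>0"] by simp
    also have "\<dots> \<le> L * e" using \<zeta> \<open>L \<ge> 0\<close> by (intro mult_left_mono) (auto simp: dist_norm)
    finally have "s * (- Dr (\<zeta> - \<zeta>0)) \<le> s * (e * L)"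
      using \<open>s > 0\<close> by (simp only: mult.commute[of e L] mult_le_cancel_left_pos)
    then show ?thesis by simp
  qed
  ultimately show ?thesis by linarith
qed

section \<open>Piecewise smooth domains and their faces\<close>

locale pw_smooth_domain =
  fixes D :: "'a::euclidean_space set" and N :: nat
    and Ds :: "nat \<Rightarrow> 'a set" and r :: "nat \<Rightarrow> 'a \<Rightarrow> real"
  assumes pw: "piecewise_smooth_domain D N Ds r"
begin

lemma N_pos: "0 < N"
  and D_eq: "D = (\<Inter>j<N. Ds j)"
  and gradients_independent: "J \<subseteq> {..<N} \<Longrightarrow> \<forall>j\<in>J. z \<in> frontier (Ds j)
         \<Longrightarrow> (\<Sum>j\<in>J. c j *\<^sub>R grad (r j) z) = 0 \<Longrightarrow> \<forall>j\<in>J. c j = 0"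
  using pw unfolding piecewise_smooth_domain_def by blast+

lemma Ds_eq: "j < N \<Longrightarrow> Ds j = {z. r j z < 0}"
  and bounded_Ds: "j < N \<Longrightarrow> bounded (Ds j)"
  and C1_function_r: "j < N \<Longrightarrow> C1_function (r j)"
  and grad_r_nonzero: "j < N \<Longrightarrow> r j z = 0 \<Longrightarrow> grad (r j) z \<noteq> 0"
  using pw smooth_inf_imp_C1_function
  unfolding piecewise_smooth_domain_def smooth_bdry_domain_def by blast+

lemma mem_D_iff: "z \<in> D \<longleftrightarrow> (\<forall>j<N. r j z < 0)"
  using D_eq Ds_eq by auto

lemma open_Ds: "j < N \<Longrightarrow> open (Ds j)"
  using Ds_eq[of j] C1_function_continuous[OF C1_function_r[of j]] by (simp add: open_Collect_less)

lemma open_D: "open D"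
  unfolding D_eq by (simp add: open_INT open_Ds)

lemma bounded_D: "bounded D"
proof (rule bounded_subset[OF bounded_Ds[OF N_pos]])
  show "D \<subseteq> Ds 0" using D_eq N_pos by auto
qed

lemma frontier_D_eq: "frontier D = closure D - D"
  unfolding frontier_def interior_open[OF open_D] ..

lemma r_nonpos_on_closure: "j < N \<Longrightarrow> z \<in> closure D \<Longrightarrow> r j z \<le> 0"
  using closure_minimal[of D "{z. r j z \<le> 0}"] mem_D_iff
    C1_function_continuous[OF C1_function_r, of j]
  by (force simp: closed_Collect_le)

lemma frontier_Ds_eq: "j < N \<Longrightarrow> frontier (Ds j) = {z. r j z = 0}"
proof -
  assume j: "j < N"
  have "open (Ds j)" "closed {z. r j z \<le> 0}"
    using Ds_eq[OF j] C1_function_continuous[OF C1_function_r[OF j]]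
    by (auto simp: open_Collect_less closed_Collect_le continuous_on_const)
  moreover have "closure (Ds j) \<subseteq> {z. r j z \<le> 0}"
    using calculation(2) Ds_eq[OF j] by (intro closure_minimal) auto
  moreover have "{z. r j z = 0} \<subseteq> closure (Ds j)"
    using C1_function_zero_in_closure_negative[OF C1_function_r[OF j]] grad_r_nonzero[OF j]
      Ds_eq[OF j] by auto
  ultimately show ?thesis
    using Ds_eq[OF j] unfolding frontier_def interior_open[OF \<open>open (Ds j)\<close>] by fastforce
qed

lemma r_nonpos_on_frontier: "z \<in> frontier D \<Longrightarrow> j < N \<Longrightarrow> r j z \<le> 0"
  using r_nonpos_on_closure by (simp add: frontier_D_eq)

lemma connected_component_one_face_pts_subset:
  assumes x: "x \<in> one_face_pts D N Ds" and xj: "x \<in> frontier (Ds j)" and j: "j < N"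
  shows "connected_component_set (one_face_pts D N Ds) x \<subseteq> frontier (Ds j)"
proof -
  define S where "S = one_face_pts D N Ds"
  define C where "C = connected_component_set S x"
  define B where "B = (\<Union>k\<in>{..<N} - {j}. frontier (Ds k))"
  have one: "\<exists>m. {k. k < N \<and> z \<in> frontier (Ds k)} = {m}" if "z \<in> S" for z
    using that unfolding S_def one_face_pts_def by (simp add: card_1_singleton_iff)
  have "S \<subseteq> frontier (Ds j) \<union> B"
  proof
    fix z assume "z \<in> S"
    then obtain m where "{k. k < N \<and> z \<in> frontier (Ds k)} = {m}" using one by blast
    then have "m < N" "z \<in> frontier (Ds m)" by auto
    then show "z \<in> frontier (Ds j) \<union> B" unfolding B_def by (cases "m = j") auto
  qed
  moreover have "frontier (Ds j) \<inter> B \<inter> S = {}"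
  proof (rule ccontr)
    assume "frontier (Ds j) \<inter> B \<inter> S \<noteq> {}"
    then obtain z k where "z \<in> S" "z \<in> frontier (Ds j)" "k < N" "k \<noteq> j" "z \<in> frontier (Ds k)"
      unfolding B_def by auto
    moreover obtain m where "{k. k < N \<and> z \<in> frontier (Ds k)} = {m}"
      using one[OF \<open>z \<in> S\<close>] by blast
    ultimately show False using j unfolding set_eq_iff by (metis (mono_tags, lifting) mem_Collect_eq singletonD)
  qed
  moreover have "closed B" unfolding B_def by (intro closed_UN) auto
  moreover have "C \<subseteq> S" "x \<in> C"
    using x by (auto simp: C_def S_def connected_component_subset connected_component_refl)
  moreover have "connected C" by (simp add: C_def)
  ultimately have "frontier (Ds j) \<inter> C = {} \<or> B \<inter> C = {}"
    by (intro connected_closedD) auto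
  then have "B \<inter> C = {}" using xj \<open>x \<in> C\<close> by blast
  then show ?thesis using \<open>C \<subseteq> S\<close> \<open>S \<subseteq> frontier (Ds j) \<union> B\<close> by (auto simp: C_def S_def)
qed

lemma one_face_pt_if_sole_zero:
  assumes j: "j < N" and zero: "r j x = 0" and neg: "\<And>i. i < N \<Longrightarrow> i \<noteq> j \<Longrightarrow> r i x < 0"
  shows "x \<in> one_face_pts D N Ds"
proof -
  have "x \<in> frontier (Ds j)" using frontier_Ds_eq[OF j] zero by simp
  define U where "U = (\<Inter>i\<in>{..<N} - {j}. Ds i)"
  have "open U" "x \<in> U"
    unfolding U_def using open_Ds Ds_eq neg by auto
  moreover have "x \<in> closure (Ds j)" using \<open>x \<in> frontier (Ds j)\<close> by (simp add: frontier_def)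
  ultimately have "x \<in> closure (U \<inter> Ds j)" using open_Int_closure_subset by blast
  moreover have "U \<inter> Ds j = D" unfolding U_def D_eq using j by auto
  moreover have "x \<notin> D" using mem_D_iff j zero by auto
  ultimately have "x \<in> frontier D" by (simp add: frontier_D_eq)
  moreover have "{k. k < N \<and> x \<in> frontier (Ds k)} = {j}"
    using frontier_Ds_eq neg zero j by fastforce
  ultimately show ?thesis unfolding one_face_pts_def by simp
qed

lemma uniform_radius_near_closure:
  assumes "\<zeta> \<in> closure D" "\<epsilon> > 0"
  obtains \<delta> where "\<delta> > 0"
    "\<And>i x y. i < N \<Longrightarrow> r i \<zeta> = 0 \<Longrightarrow> x \<in> ball \<zeta> \<delta> \<Longrightarrow> y \<in> ball \<zeta> \<delta> \<Longrightarrow>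
       \<bar>r i y - r i x - grad (r i) \<zeta> \<bullet> (y - x)\<bar> \<le> \<epsilon> * norm (y - x)"
    "\<And>i x. i < N \<Longrightarrow> r i \<zeta> \<noteq> 0 \<Longrightarrow> x \<in> ball \<zeta> \<delta> \<Longrightarrow> r i x < 0"
proof -
  define P where "P i d \<longleftrightarrow> (r i \<zeta> = 0 \<longrightarrow> (\<forall>x\<in>ball \<zeta> d. \<forall>y\<in>ball \<zeta> d.
       \<bar>r i y - r i x - grad (r i) \<zeta> \<bullet> (y - x)\<bar> \<le> \<epsilon> * norm (y - x)))
     \<and> (r i \<zeta> \<noteq> 0 \<longrightarrow> (\<forall>x\<in>ball \<zeta> d. r i x < 0))" for i d
  have "\<exists>\<delta>>0. P i \<delta>" if "i < N" for i
  proof (cases "r i \<zeta> = 0")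
    case True
    then show ?thesis
      using C1_function_strict_derivative[OF C1_function_r[OF that] \<open>\<epsilon> > 0\<close>, of \<zeta>]
      by (metis P_def C1_function_derivative_eq_grad[OF C1_function_r[OF that]])
  next
    case False
    then have "r i \<zeta> < 0" using r_nonpos_on_closure that assms(1) by fastforce
    moreover have "(r i \<longlongrightarrow> r i \<zeta>) (at \<zeta>)"
      using C1_function_isCont[OF C1_function_r[OF that]] by (simp add: isCont_def)
    ultimately have "\<forall>\<^sub>F x in at \<zeta>. r i x < 0" by (rule order_tendstoD(2)[rotated])
    then obtain \<delta> where "\<delta> > 0" "\<forall>x. x \<noteq> \<zeta> \<and> dist x \<zeta> < \<delta> \<longrightarrow> r i x < 0"
      unfolding eventually_at by auto
    then have "\<forall>x\<in>ball \<zeta> \<delta>. r i x < 0"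
      using \<open>r i \<zeta> < 0\<close> by (metis mem_ball dist_commute)
    then show ?thesis using False \<open>\<delta> > 0\<close> by (auto simp: P_def)
  qed
  moreover have "P i d" if "P i \<delta>" "0 < d" "d \<le> \<delta>" for i d \<delta>
    using that(1) subset_ball[OF that(3), of \<zeta>] unfolding P_def by blast
  ultimately have "\<forall>i\<in>{..<N}. \<forall>\<^sub>F d in at_right 0. P i d"
    unfolding eventually_at_right_field by (metis lessThan_iff less_le)
  then have "\<forall>\<^sub>F d in at_right 0. \<forall>i\<in>{..<N}. P i d"
    by (rule eventually_ball_finite[rotated]) simp
  then obtain \<delta> where "\<delta> > 0" "\<forall>i<N. P i \<delta>"
    unfolding eventually_at_right_field by (metis field_lbound_gt_zero lessThan_iff)
  then show ?thesis using that unfolding P_def by blast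
qed

lemma exists_active_frame:
  obtains v where "\<And>i. i < N \<Longrightarrow> r i \<zeta> = 0 \<Longrightarrow> grad (r i) \<zeta> \<bullet> v = (if i = j then 0 else -1)"
proof -
  define J where "J = {i. i < N \<and> r i \<zeta> = 0}"
  have "finite J" "J \<subseteq> {..<N}" "\<forall>i\<in>J. \<zeta> \<in> frontier (Ds i)"
    using frontier_Ds_eq by (auto simp: J_def)
  then have "\<And>c. (\<Sum>i\<in>J. c i *\<^sub>R grad (r i) \<zeta>) = 0 \<Longrightarrow> \<forall>i\<in>J. c i = 0"
    by (intro gradients_independent)
  from exists_vector_inner_eq[where g = "\<lambda>i. grad (r i) \<zeta>" and t = "\<lambda>i. if i = j then 0 else -1",
      OF \<open>finite J\<close> this]
  obtain v where "\<And>i. i \<in> J \<Longrightarrow> grad (r i) \<zeta> \<bullet> v = (if i = j then 0 else -1)" by blast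
  then show thesis by (intro that[of v]) (simp add: J_def)
qed

text \<open>Coordinates at \<open>\<zeta> \<in> bD\<^sub>j\<close>: \<open>g\<close> is the gradient of \<open>r\<^sub>j\<close>, and \<open>v\<close> is tangent to \<open>bD\<^sub>j\<close>
  but points into every other \<open>D\<^sub>i\<close> active at \<open>\<zeta>\<close>.  Along \<open>\<tau> \<mapsto> \<zeta> + s v + \<tau> g\<close> the function
  \<open>r\<^sub>j\<close> increases and changes sign within \<open>|\<tau>| \<le> \<eta> s\<close>, where all other \<open>r\<^sub>i\<close> are negative.\<close>
lemma transverse_chart:
  assumes \<zeta>: "\<zeta> \<in> frontier D" and j: "j < N" "r j \<zeta> = 0"
  obtains \<eta> s1 v g where "\<eta> > 0" "s1 > 0"
    "\<And>s \<tau>1 \<tau>2. s \<in> {0<..s1} \<Longrightarrow> \<tau>1 \<in> {- 2 * \<eta> * s1..2 * \<eta> * s1} \<Longrightarrow> \<tau>2 \<in> {- 2 * \<eta> * s1..2 * \<eta> * s1}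
       \<Longrightarrow> \<tau>1 < \<tau>2 \<Longrightarrow> r j (\<zeta> + s *\<^sub>R v + \<tau>1 *\<^sub>R g) < r j (\<zeta> + s *\<^sub>R v + \<tau>2 *\<^sub>R g)"
    "\<And>s. s \<in> {0<..s1} \<Longrightarrow> r j (\<zeta> + s *\<^sub>R v + (\<eta> * s) *\<^sub>R g) > 0"
    "\<And>s. s \<in> {0<..s1} \<Longrightarrow> r j (\<zeta> + s *\<^sub>R v + (- \<eta> * s) *\<^sub>R g) < 0"
    "\<And>s \<tau> i. s \<in> {0<..s1} \<Longrightarrow> \<bar>\<tau>\<bar> \<le> \<eta> * s \<Longrightarrow> i < N \<Longrightarrow> i \<noteq> j
       \<Longrightarrow> r i (\<zeta> + s *\<^sub>R v + \<tau> *\<^sub>R g) < 0"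
proof -
  define J where "J = {i. i < N \<and> r i \<zeta> = 0}"
  define gg where "gg i = grad (r i) \<zeta>" for i
  have J: "finite J" "j \<in> J" "J \<subseteq> {..<N}" using j by (auto simp: J_def)
  obtain v where "\<And>i. i < N \<Longrightarrow> r i \<zeta> = 0 \<Longrightarrow> gg i \<bullet> v = (if i = j then 0 else -1)"
    unfolding gg_def using exists_active_frame by blast
  then have v: "\<And>i. i \<in> J \<Longrightarrow> gg i \<bullet> v = (if i = j then 0 else -1)" by (simp add: J_def)
  define g where "g = gg j"
  define G where "G = norm g"
  have "G > 0" using grad_r_nonzero[OF j] by (simp add: G_def g_def gg_def)
  define M where "M = 1 + (\<Sum>i\<in>J. \<bar>gg i \<bullet> g\<bar>)"
  have M: "\<bar>gg i \<bullet> g\<bar> \<le> M" if "i \<in> J" for i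
    using member_le_sum[OF that, of "\<lambda>i. \<bar>gg i \<bullet> g\<bar>"] J(1) by (simp add: M_def)
  have "M \<ge> 1" by (simp add: M_def sum_nonneg)
  \<comment> \<open>\<open>\<eta>\<close> keeps \<open>\<tau> (\<nabla>r\<^sub>i \<bullet> g)\<close> below \<open>s / 4\<close>; \<open>\<epsilon>\<close> keeps all linearisation errors below the linear terms.\<close>
  define \<eta> where "\<eta> = 1 / (4 * M)"
  have \<eta>: "\<eta> > 0" "\<eta> * M = 1 / 4" using \<open>M \<ge> 1\<close> by (auto simp: \<eta>_def)
  define K where "K = norm v + 2 * \<eta> * G + 1"
  have "K \<ge> 1" using \<eta> \<open>G > 0\<close> by (simp add: K_def)
  define \<epsilon> where "\<epsilon> = min (G / 2) (min (\<eta> * G\<^sup>2 / (2 * K)) (1 / (2 * K)))"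
  have "\<epsilon> \<le> \<eta> * G\<^sup>2 / (2 * K)" "\<epsilon> \<le> 1 / (2 * K)" by (simp_all add: \<epsilon>_def)
  then have \<epsilon>: "\<epsilon> > 0" "\<epsilon> \<le> G / 2" "\<epsilon> * K \<le> \<eta> * G\<^sup>2 / 2" "\<epsilon> * K \<le> 1 / 2"
    using \<open>K \<ge> 1\<close> \<open>G > 0\<close> \<eta>(1) by (simp_all add: \<epsilon>_def pos_le_divide_eq mult.commute)
  obtain \<delta> where "\<delta> > 0" and
    approx: "\<And>i x y. i \<in> J \<Longrightarrow> x \<in> ball \<zeta> \<delta> \<Longrightarrow> y \<in> ball \<zeta> \<delta> \<Longrightarrow>
       \<bar>r i y - r i x - gg i \<bullet> (y - x)\<bar> \<le> \<epsilon> * norm (y - x)" and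
    inactive: "\<And>i x. i < N \<Longrightarrow> i \<notin> J \<Longrightarrow> x \<in> ball \<zeta> \<delta> \<Longrightarrow> r i x < 0"
  proof -
    have "\<zeta> \<in> closure D" using \<zeta> by (simp add: frontier_D_eq)
    then obtain \<delta> where "\<delta> > 0" and
      "\<And>i x y. i < N \<Longrightarrow> r i \<zeta> = 0 \<Longrightarrow> x \<in> ball \<zeta> \<delta> \<Longrightarrow> y \<in> ball \<zeta> \<delta> \<Longrightarrow>
         \<bar>r i y - r i x - grad (r i) \<zeta> \<bullet> (y - x)\<bar> \<le> \<epsilon> * norm (y - x)"
      "\<And>i x. i < N \<Longrightarrow> r i \<zeta> \<noteq> 0 \<Longrightarrow> x \<in> ball \<zeta> \<delta> \<Longrightarrow> r i x < 0"
      using uniform_radius_near_closure[OF _ \<epsilon>(1)] by blast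
    then show thesis by (intro that[of \<delta>]) (simp_all add: J_def gg_def)
  qed
  define s1 where "s1 = \<delta> / K"
  have "s1 > 0" using \<open>\<delta> > 0\<close> \<open>K \<ge> 1\<close> by (simp add: s1_def)
  define p where "p s \<tau> = \<zeta> + s *\<^sub>R v + \<tau> *\<^sub>R g" for s \<tau>
  have norm_p: "norm (p s \<tau> - \<zeta>) \<le> s * norm v + \<bar>\<tau>\<bar> * G" if "s \<ge> 0" for s \<tau>
    using norm_triangle_ineq[of "s *\<^sub>R v" "\<tau> *\<^sub>R g"] that by (simp add: p_def G_def)
  have p_ball: "p s \<tau> \<in> ball \<zeta> \<delta>" if "s \<in> {0<..s1}" "\<bar>\<tau>\<bar> \<le> 2 * \<eta> * s1" for s \<tau>
  proof -
    have "norm (p s \<tau> - \<zeta>) \<le> s1 * norm v + (2 * \<eta> * s1) * G"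
      using norm_p[of s \<tau>] that \<open>G > 0\<close> by (smt (verit) greaterThanAtMost_iff mult_right_mono norm_ge_zero)
    also have "\<dots> < s1 * K" using \<open>s1 > 0\<close> by (simp add: K_def algebra_simps)
    finally show ?thesis using \<open>K \<ge> 1\<close> by (simp add: s1_def dist_norm norm_minus_commute)
  qed
  have cone_in_slab: "\<bar>\<tau>\<bar> \<le> 2 * \<eta> * s1" if "s \<in> {0<..s1}" "\<bar>\<tau>\<bar> \<le> \<eta> * s" for s \<tau>
  proof -
    have "\<eta> * s \<le> \<eta> * s1" using that(1) \<eta>(1) by (simp add: mult_left_mono)
    moreover have "\<eta> * s1 > 0" using \<eta>(1) \<open>s1 > 0\<close> by simp
    ultimately show ?thesis using that(2) by linarith
  qed
  have near_linear: "\<bar>r i (p s \<tau>) - gg i \<bullet> (s *\<^sub>R v + \<tau> *\<^sub>R g)\<bar> \<le> \<epsilon> * (s * K)"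
    if "i \<in> J" "s \<in> {0<..s1}" "\<bar>\<tau>\<bar> \<le> \<eta> * s" for i s \<tau>
  proof -
    have "\<bar>r i (p s \<tau>) - r i \<zeta> - gg i \<bullet> (p s \<tau> - \<zeta>)\<bar> \<le> \<epsilon> * norm (p s \<tau> - \<zeta>)"
      using approx[OF that(1) _ p_ball[OF that(2) cone_in_slab[OF that(2,3)]]] \<open>\<delta> > 0\<close> by simp
    moreover have "norm (p s \<tau> - \<zeta>) \<le> s * K"
    proof -
      have "\<bar>\<tau>\<bar> * G \<le> \<eta> * s * G" using that(3) \<open>G > 0\<close> by (simp add: mult_right_mono)
      moreover have "s * K = s * norm v + 2 * (\<eta> * s * G) + s" by (simp add: K_def algebra_simps)
      moreover have "0 \<le> \<eta> * s * G" "0 < s" using that(2) \<eta>(1) \<open>G > 0\<close> by auto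
      ultimately show ?thesis using norm_p[of s \<tau>] by linarith
    qed
    then have "\<epsilon> * norm (p s \<tau> - \<zeta>) \<le> \<epsilon> * (s * K)" using \<epsilon>(1) by (simp add: mult_left_mono)
    moreover have "r i \<zeta> = 0" "p s \<tau> - \<zeta> = s *\<^sub>R v + \<tau> *\<^sub>R g"
      using that(1) by (auto simp: J_def p_def)
    ultimately show ?thesis by simp
  qed
  show ?thesis
  proof (rule that[of \<eta> s1 v g, folded p_def])
    fix s \<tau>1 \<tau>2 assume s: "s \<in> {0<..s1}" and \<tau>: "\<tau>1 \<in> {- 2 * \<eta> * s1..2 * \<eta> * s1}" "\<tau>2 \<in> {- 2 * \<eta> * s1..2 * \<eta> * s1}"
      and "\<tau>1 < \<tau>2"
    have "\<bar>\<tau>1\<bar> \<le> 2 * \<eta> * s1" "\<bar>\<tau>2\<bar> \<le> 2 * \<eta> * s1" using \<tau> by auto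
    then have "\<bar>r j (p s \<tau>2) - r j (p s \<tau>1) - gg j \<bullet> (p s \<tau>2 - p s \<tau>1)\<bar>
        \<le> \<epsilon> * norm (p s \<tau>2 - p s \<tau>1)"
      using approx[OF J(2) p_ball[OF s] p_ball[OF s]] by blast
    moreover have "p s \<tau>2 - p s \<tau>1 = (\<tau>2 - \<tau>1) *\<^sub>R g" by (simp add: p_def algebra_simps)
    ultimately have "\<bar>r j (p s \<tau>2) - r j (p s \<tau>1) - (\<tau>2 - \<tau>1) * G\<^sup>2\<bar> \<le> \<epsilon> * ((\<tau>2 - \<tau>1) * G)"
      using \<open>\<tau>1 < \<tau>2\<close> by (simp add: g_def G_def power2_norm_eq_inner)
    moreover have "\<epsilon> * ((\<tau>2 - \<tau>1) * G) \<le> G / 2 * ((\<tau>2 - \<tau>1) * G)"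
      using \<epsilon>(2) \<open>\<tau>1 < \<tau>2\<close> \<open>G > 0\<close> by (intro mult_right_mono) auto
    moreover have "G / 2 * ((\<tau>2 - \<tau>1) * G) < (\<tau>2 - \<tau>1) * G\<^sup>2"
      using \<open>\<tau>1 < \<tau>2\<close> \<open>G > 0\<close> by (simp add: power2_eq_square)
    ultimately show "r j (p s \<tau>1) < r j (p s \<tau>2)" by linarith
  next
    fix s assume s: "s \<in> {0<..s1}"
    have "\<epsilon> * (s * K) \<le> \<eta> * G\<^sup>2 / 2 * s"
      using mult_right_mono[OF \<epsilon>(3), of s] s by (simp add: mult.commute mult.left_commute)
    also have "\<dots> < \<eta> * s * G\<^sup>2" using s \<eta>(1) \<open>G > 0\<close> by simp
    finally have err: "\<epsilon> * (s * K) < \<eta> * s * G\<^sup>2" .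
    have "gg j \<bullet> (s *\<^sub>R v + \<tau> *\<^sub>R g) = \<tau> * G\<^sup>2" for \<tau>
      using v[OF J(2)] by (simp add: inner_add_right g_def G_def power2_norm_eq_inner)
    then have rj: "\<bar>r j (p s \<tau>) - \<tau> * G\<^sup>2\<bar> \<le> \<epsilon> * (s * K)" if "\<bar>\<tau>\<bar> \<le> \<eta> * s" for \<tau>
      using near_linear[OF J(2) s that] by simp
    have "\<bar>\<eta> * s\<bar> \<le> \<eta> * s" "\<bar>- \<eta> * s\<bar> \<le> \<eta> * s" using s \<eta>(1) by auto
    from rj[OF this(1)] rj[OF this(2)] err
    show "r j (p s (\<eta> * s)) > 0" "r j (p s (- \<eta> * s)) < 0" by (simp_all add: abs_le_iff)
  next
    fix s \<tau> i assume s: "s \<in> {0<..s1}" and \<tau>: "\<bar>\<tau>\<bar> \<le> \<eta> * s" and "i < N" "i \<noteq> j"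
    show "r i (p s \<tau>) < 0"
    proof (cases "i \<in> J")
      case False
      show ?thesis using inactive[OF \<open>i < N\<close> False p_ball[OF s cone_in_slab[OF s \<tau>]]] .
    next
      case True
      have "gg i \<bullet> (s *\<^sub>R v + \<tau> *\<^sub>R g) = - s + \<tau> * (gg i \<bullet> g)"
        using v[OF True] \<open>i \<noteq> j\<close> by (simp add: inner_add_right)
      moreover have "\<bar>\<tau> * (gg i \<bullet> g)\<bar> \<le> \<eta> * s * M"
        unfolding abs_mult using \<tau> M[OF True] by (intro mult_mono) auto
      moreover have "\<eta> * s * M = s / 4" using \<eta>(2) by (simp add: mult.commute mult.left_commute)
      moreover have "\<epsilon> * (s * K) \<le> 1 / 2 * s"
        using mult_right_mono[OF \<epsilon>(4), of s] s by (simp add: mult.commute mult.left_commute)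
      moreover have "s > 0" using s by simp
      ultimately show ?thesis using near_linear[OF True s \<tau>] unfolding abs_le_iff by linarith
    qed
  qed (use \<eta>(1) \<open>s1 > 0\<close> in auto)
qed

lemma continuous_on_r_compose:
  assumes "j < N" "continuous_on S f"
  shows "continuous_on S (\<lambda>t. r j (f t))"
  by (rule continuous_on_compose2[OF C1_function_continuous[OF C1_function_r[OF assms(1)]] assms(2)]) simp

lemma one_face_curve:
  assumes \<zeta>: "\<zeta> \<in> frontier D" and j: "j < N" "r j \<zeta> = 0"
  obtains s1 \<gamma> K where "s1 > 0" "continuous_on {0<..s1} \<gamma>"
    "\<And>s. s \<in> {0<..s1} \<Longrightarrow> \<gamma> s \<in> one_face_pts D N Ds \<and> \<gamma> s \<in> frontier (Ds j)"
    "\<And>s. s \<in> {0<..s1} \<Longrightarrow> norm (\<gamma> s - \<zeta>) \<le> s * K"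
proof -
  obtain \<eta> s1 v g where "\<eta> > 0" "s1 > 0" and
    mono: "\<And>s \<tau>1 \<tau>2. s \<in> {0<..s1} \<Longrightarrow> \<tau>1 \<in> {- 2 * \<eta> * s1..2 * \<eta> * s1}
       \<Longrightarrow> \<tau>2 \<in> {- 2 * \<eta> * s1..2 * \<eta> * s1} \<Longrightarrow> \<tau>1 < \<tau>2
       \<Longrightarrow> r j (\<zeta> + s *\<^sub>R v + \<tau>1 *\<^sub>R g) < r j (\<zeta> + s *\<^sub>R v + \<tau>2 *\<^sub>R g)" and
    pos: "\<And>s. s \<in> {0<..s1} \<Longrightarrow> r j (\<zeta> + s *\<^sub>R v + (\<eta> * s) *\<^sub>R g) > 0" and
    neg: "\<And>s. s \<in> {0<..s1} \<Longrightarrow> r j (\<zeta> + s *\<^sub>R v + (- \<eta> * s) *\<^sub>R g) < 0" and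
    others: "\<And>s \<tau> i. s \<in> {0<..s1} \<Longrightarrow> \<bar>\<tau>\<bar> \<le> \<eta> * s \<Longrightarrow> i < N \<Longrightarrow> i \<noteq> j
       \<Longrightarrow> r i (\<zeta> + s *\<^sub>R v + \<tau> *\<^sub>R g) < 0"
    by (rule transverse_chart[OF assms]) blast
  define p where "p s \<tau> = \<zeta> + s *\<^sub>R v + \<tau> *\<^sub>R g" for s \<tau>
  have "\<forall>s\<in>{0<..s1}. \<exists>\<tau>. \<bar>\<tau>\<bar> \<le> \<eta> * s \<and> r j (p s \<tau>) = 0"
  proof
    fix s assume s: "s \<in> {0<..s1}"
    have "continuous_on {- \<eta> * s..\<eta> * s} (\<lambda>\<tau>. r j (p s \<tau>))"
      unfolding p_def by (intro continuous_on_r_compose j continuous_intros)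
    moreover have "r j (p s (- \<eta> * s)) \<le> 0" "0 \<le> r j (p s (\<eta> * s))" "- \<eta> * s \<le> \<eta> * s"
      using neg[OF s] pos[OF s] s \<open>\<eta> > 0\<close> by (auto simp: p_def)
    ultimately obtain \<tau> where "- \<eta> * s \<le> \<tau>" "\<tau> \<le> \<eta> * s" "r j (p s \<tau>) = 0"
      using IVT'[of "\<lambda>\<tau>. r j (p s \<tau>)"] by blast
    then show "\<exists>\<tau>. \<bar>\<tau>\<bar> \<le> \<eta> * s \<and> r j (p s \<tau>) = 0"
      by (intro exI[of _ \<tau>]) (simp add: abs_le_iff)
  qed
  from bchoice[OF this]
  obtain \<tau> where \<tau>: "\<forall>s\<in>{0<..s1}. \<bar>\<tau> s\<bar> \<le> \<eta> * s \<and> r j (p s (\<tau> s)) = 0"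
    by (elim exE)
  have "continuous_on {0<..s1} \<tau>"
  proof (rule continuous_on_implicit_zero[where a = "- 2 * \<eta> * s1" and b = "2 * \<eta> * s1"])
    show "continuous_on {0<..s1} (\<lambda>s. r j (p s t))" for t
      unfolding p_def by (intro continuous_on_r_compose j continuous_intros)
    show "\<tau> s \<in> {- 2 * \<eta> * s1<..<2 * \<eta> * s1} \<and> r j (p s (\<tau> s)) = 0" if "s \<in> {0<..s1}" for s
    proof -
      have "\<eta> * s \<le> \<eta> * s1" "0 < \<eta> * s1" using that \<open>\<eta> > 0\<close> \<open>s1 > 0\<close> by simp_all
      then show ?thesis using \<tau>[rule_format, OF that] unfolding abs_le_iff by auto
    qed
  next
    show "r j (p s t1) < r j (p s t2)"
      if "s \<in> {0<..s1}" "t1 \<in> {- 2 * \<eta> * s1..2 * \<eta> * s1}" "t2 \<in> {- 2 * \<eta> * s1..2 * \<eta> * s1}"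
        "t1 < t2" for s t1 t2
      using mono[OF that] by (simp add: p_def)
  qed
  show ?thesis
  proof (rule that[of s1 "\<lambda>s. p s (\<tau> s)" "norm v + \<eta> * norm g"])
    show "continuous_on {0<..s1} (\<lambda>s. p s (\<tau> s))"
      unfolding p_def by (intro continuous_intros \<open>continuous_on {0<..s1} \<tau>\<close>)
    fix s assume s: "s \<in> {0<..s1}"
    then have "p s (\<tau> s) \<in> one_face_pts D N Ds"
      using others[OF s] \<tau>[rule_format, OF s] by (intro one_face_pt_if_sole_zero[OF j(1)]) (auto simp: p_def)
    then show "p s (\<tau> s) \<in> one_face_pts D N Ds \<and> p s (\<tau> s) \<in> frontier (Ds j)"
      using \<tau>[rule_format, OF s] frontier_Ds_eq[OF j(1)] by simp
    have "norm (p s (\<tau> s) - \<zeta>) \<le> s * norm v + \<bar>\<tau> s\<bar> * norm g"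
      using norm_triangle_ineq[of "s *\<^sub>R v" "\<tau> s *\<^sub>R g"] s by (simp add: p_def)
    also have "\<dots> \<le> s * norm v + \<eta> * s * norm g"
      using \<tau>[rule_format, OF s] by (simp add: mult_right_mono)
    finally show "norm (p s (\<tau> s) - \<zeta>) \<le> s * (norm v + \<eta> * norm g)"
      by (simp add: algebra_simps)
  qed (use \<open>s1 > 0\<close> in simp)
qed

lemma face_through_active_point:
  assumes "\<zeta> \<in> frontier D" "j < N" "r j \<zeta> = 0"
  obtains F where "is_face D N Ds F" "\<zeta> \<in> closure F" "F \<subseteq> frontier (Ds j)"
proof -
  obtain s1 \<gamma> K where "s1 > 0" and cont: "continuous_on {0<..s1} \<gamma>"
    and \<gamma>: "\<And>s. s \<in> {0<..s1} \<Longrightarrow> \<gamma> s \<in> one_face_pts D N Ds \<and> \<gamma> s \<in> frontier (Ds j)"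
    and near: "\<And>s. s \<in> {0<..s1} \<Longrightarrow> norm (\<gamma> s - \<zeta>) \<le> s * K"
    by (rule one_face_curve[OF assms]) blast
  define F where "F = connected_component_set (one_face_pts D N Ds) (\<gamma> s1)"
  have s1: "s1 \<in> {0<..s1}" using \<open>s1 > 0\<close> by simp
  have "\<gamma> ` {0<..s1} \<subseteq> F"
    unfolding F_def using \<gamma> s1
    by (intro connected_component_maximal connected_continuous_image[OF cont]) (auto simp: is_interval_connected)
  moreover have "\<zeta> \<in> closure (\<gamma> ` {0<..s1})"
    unfolding closure_approachable
  proof (intro allI impI)
    fix e :: real assume "e > 0"
    define c where "c = \<bar>K\<bar> + 1"
    define s where "s = min s1 (e / (2 * c))"
    have "c > 0" by (simp add: c_def add_nonneg_pos)
    have "s * c \<le> e / (2 * c) * c" unfolding s_def using \<open>c > 0\<close> by (intro mult_right_mono) auto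
    also have "\<dots> < e" using \<open>c > 0\<close> \<open>e > 0\<close> by simp
    finally have s: "s \<in> {0<..s1}" "s * (\<bar>K\<bar> + 1) < e"
      using \<open>s1 > 0\<close> \<open>e > 0\<close> \<open>c > 0\<close> by (auto simp: s_def c_def)
    have "s * K \<le> s * (\<bar>K\<bar> + 1)" using s(1) by (intro mult_left_mono) auto
    then have "dist (\<gamma> s) \<zeta> < e" using near[OF s(1)] s(2) by (simp add: dist_norm)
    then show "\<exists>x\<in>\<gamma> ` {0<..s1}. dist x \<zeta> < e" using s(1) by blast
  qed
  ultimately have "\<zeta> \<in> closure F" using closure_mono by blast
  moreover have "is_face D N Ds F" using \<gamma>[OF s1] unfolding is_face_def F_def by blast
  moreover have "F \<subseteq> frontier (Ds j)"
    unfolding F_def using \<gamma>[OF s1] assms(2) by (intro connected_component_one_face_pts_subset) auto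
  ultimately show thesis using that by blast
qed

end

section \<open>Radial cones in star-shaped domains\<close>

locale starlike_pw_smooth_domain = pw_smooth_domain +
  assumes starlike: "\<And>z t. z \<in> D \<Longrightarrow> 0 \<le> t \<Longrightarrow> t \<le> 1 \<Longrightarrow> t *\<^sub>R z \<in> D"
begin

lemma starlike_closure: "z \<in> closure D \<Longrightarrow> 0 \<le> t \<Longrightarrow> t \<le> 1 \<Longrightarrow> t *\<^sub>R z \<in> closure D"
  using closure_mono[of "(*\<^sub>R) t ` D" D] starlike closure_scaleR[of t D] by blast

text \<open>Moving from a boundary point towards \<open>0\<close> stays in \<open>closure D\<close>, where \<open>r\<^sub>j \<le> 0\<close>.\<close>
lemma radial_derivative_nonneg:
  assumes \<zeta>: "\<zeta> \<in> frontier D" and j: "j < N" "r j \<zeta> = 0"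
  shows "frechet_derivative (r j) (at \<zeta>) \<zeta> \<ge> 0"
proof (rule ccontr)
  assume "\<not> ?thesis"
  then have "frechet_derivative (r j) (at (0 + 1 *\<^sub>R \<zeta>)) \<zeta> < 0" by simp
  then obtain d where "d > 0" and
    d: "\<And>h. h > 0 \<Longrightarrow> h < d \<Longrightarrow> r j (0 + 1 *\<^sub>R \<zeta>) < r j (0 + (1 - h) *\<^sub>R \<zeta>)"
    using DERIV_neg_dec_left[OF C1_function_has_real_derivative_line[OF C1_function_r[OF j(1)]]]
    by blast
  define h where "h = min (d / 2) (1 / 2)"
  have h: "h > 0" "h < d" "h \<le> 1" using \<open>d > 0\<close> by (auto simp: h_def)
  have "r j ((1 - h) *\<^sub>R \<zeta>) > 0" using d[OF h(1,2)] j by simp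
  moreover have "(1 - h) *\<^sub>R \<zeta> \<in> closure D"
    using \<zeta> h by (intro starlike_closure) (auto simp: frontier_D_eq)
  ultimately show False using r_nonpos_on_closure[OF j(1)] by fastforce
qed

end

locale radially_transverse_domain = starlike_pw_smooth_domain +
  assumes transverse: "\<And>\<zeta> F j. \<zeta> \<in> frontier D \<Longrightarrow> is_face D N Ds F \<Longrightarrow> \<zeta> \<in> closure F
                   \<Longrightarrow> j < N \<Longrightarrow> F \<subseteq> frontier (Ds j)
                   \<Longrightarrow> frechet_derivative (r j) (at \<zeta>) \<zeta> \<noteq> 0"
begin

lemma radial_derivative_pos:
  assumes "\<zeta> \<in> frontier D" "j < N" "r j \<zeta> = 0"
  shows "frechet_derivative (r j) (at \<zeta>) \<zeta> > 0"
proof -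
  obtain F where F: "is_face D N Ds F" "\<zeta> \<in> closure F" "F \<subseteq> frontier (Ds j)"
    using face_through_active_point[OF assms] .
  have "frechet_derivative (r j) (at \<zeta>) \<zeta> \<noteq> 0"
    using transverse[OF assms(1) F(1,2) assms(2) F(3)] .
  then show ?thesis using radial_derivative_nonneg[OF assms] by linarith
qed

text \<open>The truncated cones with vertex \<open>\<zeta> \<in> bD\<close> near \<open>\<zeta>0\<close>, axis towards \<open>0\<close>, and aperture
  and height \<open>e\<close> lie in \<open>D\<^sub>i\<close>.\<close>
definition cone_inside :: "nat \<Rightarrow> 'a \<Rightarrow> real \<Rightarrow> bool" where
  "cone_inside i \<zeta>0 e \<longleftrightarrow> (\<forall>\<zeta>\<in>frontier D. dist \<zeta> \<zeta>0 < e \<longrightarrow>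
     (\<forall>s\<in>{0<..e}. \<forall>y\<in>ball ((1 - s) *\<^sub>R \<zeta>) (e * s). r i y < 0))"

lemma cone_inside_mono: "cone_inside i \<zeta>0 e \<Longrightarrow> 0 < e' \<Longrightarrow> e' \<le> e \<Longrightarrow> cone_inside i \<zeta>0 e'"
  unfolding cone_inside_def
  by (smt (verit) ball_subset_ball_iff greaterThanAtMost_iff mult_right_mono subset_iff)

lemma cone_inside_inactive:
  assumes i: "i < N" and \<zeta>0: "\<zeta>0 \<in> frontier D" and "r i \<zeta>0 \<noteq> 0"
  shows "\<exists>e>0. cone_inside i \<zeta>0 e"
proof -
  have "r i \<zeta>0 < 0" using r_nonpos_on_frontier[OF \<zeta>0 i] \<open>r i \<zeta>0 \<noteq> 0\<close> by simp
  moreover have "(r i \<longlongrightarrow> r i \<zeta>0) (at \<zeta>0)"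
    using C1_function_isCont[OF C1_function_r[OF i]] by (simp add: isCont_def)
  ultimately have "\<forall>\<^sub>F x in at \<zeta>0. r i x < 0" by (rule order_tendstoD(2)[rotated])
  then obtain \<rho> where "\<rho> > 0" and \<rho>: "\<forall>x. x \<noteq> \<zeta>0 \<and> dist x \<zeta>0 < \<rho> \<longrightarrow> r i x < 0"
    unfolding eventually_at by auto
  define e where "e = min 1 (\<rho> / (norm \<zeta>0 + 3))"
  have e: "0 < e" "e \<le> 1" "e * (norm \<zeta>0 + 3) \<le> \<rho>"
    using \<open>\<rho> > 0\<close> by (auto simp: e_def min_def pos_le_divide_eq add_nonneg_pos)
  have "r i y < 0" if "\<zeta> \<in> frontier D" "dist \<zeta> \<zeta>0 < e" "s \<in> {0<..e}" "y \<in> ball ((1 - s) *\<^sub>R \<zeta>) (e * s)"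
    for \<zeta> s y
  proof -
    have "dist y \<zeta>0 < \<rho>" using cone_point_bounds(2)[OF e(1,2) that(2) _ _ that(4)] that(3) e(3) by simp
    then show ?thesis using \<rho> \<open>r i \<zeta>0 < 0\<close> by (cases "y = \<zeta>0") auto
  qed
  then show ?thesis using e(1) unfolding cone_inside_def by blast
qed

text \<open>At an active constraint the radial derivative \<open>a\<close> is positive, so \<open>r\<^sub>i\<close> decreases by about
  \<open>s a\<close> along the ray, which dominates the linearisation errors on a cone of aperture \<open>e\<close>.\<close>
lemma cone_inside_active:
  assumes i: "i < N" and \<zeta>0: "\<zeta>0 \<in> frontier D" and "r i \<zeta>0 = 0"
  shows "\<exists>e>0. cone_inside i \<zeta>0 e"
proof -
  define Dr where "Dr = frechet_derivative (r i) (at \<zeta>0)"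
  define a where "a = Dr \<zeta>0"
  define n0 where "n0 = norm \<zeta>0"
  have "a > 0" unfolding a_def Dr_def using radial_derivative_pos[OF \<zeta>0 i \<open>r i \<zeta>0 = 0\<close>] .
  have "linear Dr" unfolding Dr_def by (rule C1_function_linear_derivative[OF C1_function_r[OF i]])
  then obtain L where "L > 0" and L: "\<And>w. \<bar>Dr w\<bar> \<le> L * norm w"
    by (metis linear_bounded_pos real_norm_def)
  have "n0 \<ge> 0" by (simp add: n0_def)
  define \<epsilon> where "\<epsilon> = a / 4 / (n0 + 2)"
  have "n0 + 2 \<noteq> 0" using \<open>n0 \<ge> 0\<close> by simp
  then have "\<epsilon> * (n0 + 2) = a / 4"
    using \<epsilon>_def nonzero_eq_divide_eq by metis
  have "\<epsilon> > 0" using \<open>a > 0\<close> \<open>n0 \<ge> 0\<close> by (simp add: \<epsilon>_def)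
  obtain \<delta> where "\<delta> > 0" and
    \<delta>: "\<And>x y. x \<in> ball \<zeta>0 \<delta> \<Longrightarrow> y \<in> ball \<zeta>0 \<delta> \<Longrightarrow> \<bar>r i y - r i x - Dr (y - x)\<bar> \<le> \<epsilon> * norm (y - x)"
    using C1_function_strict_derivative[OF C1_function_r[OF i] \<open>\<epsilon> > 0\<close>] unfolding Dr_def by blast
  define e where "e = min 1 (min (\<delta> / (n0 + 3)) (a / (8 * L)))"
  have "e \<le> \<delta> / (n0 + 3)" "e \<le> a / (8 * L)" by (simp_all add: e_def)
  then have "e * (n0 + 3) \<le> \<delta>" "e * (8 * L) \<le> a"
    using \<open>L > 0\<close> \<open>n0 \<ge> 0\<close> by (simp_all add: pos_le_divide_eq)
  then have e: "0 < e" "e \<le> 1" "e * (n0 + 3) \<le> \<delta>" "e * L \<le> a / 8"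
    using \<open>\<delta> > 0\<close> \<open>a > 0\<close> \<open>L > 0\<close> \<open>n0 \<ge> 0\<close> by (auto simp: e_def)
  have "r i y < 0" if \<zeta>: "\<zeta> \<in> frontier D" "dist \<zeta> \<zeta>0 < e" and s: "s \<in> {0<..e}"
    and y: "y \<in> ball ((1 - s) *\<^sub>R \<zeta>) (e * s)" for \<zeta> s y
  proof -
    have "s > 0" "s \<le> e" using s by auto
    note bounds = cone_point_bounds[OF e(1,2) \<zeta>(2) this y, folded n0_def]
    have "e \<le> e * (n0 + 3)" using e(1) \<open>n0 \<ge> 0\<close> by simp
    then have "\<zeta> \<in> ball \<zeta>0 \<delta>" "y \<in> ball \<zeta>0 \<delta>"
      using \<zeta>(2) bounds(2) e(3) by (simp_all add: dist_commute)
    then have "r i y - r i \<zeta> \<le> Dr (y - \<zeta>) + \<epsilon> * norm (y - \<zeta>)"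
      using \<delta>[of \<zeta> y] by (simp add: abs_le_iff)
    moreover have "\<epsilon> * norm (y - \<zeta>) \<le> s * (a / 4)"
    proof -
      have "\<epsilon> * norm (y - \<zeta>) \<le> \<epsilon> * (s * (n0 + 2))"
        using bounds(1) \<open>\<epsilon> > 0\<close> by (simp add: mult_left_mono)
      also have "\<dots> = s * (\<epsilon> * (n0 + 2))" by (simp only: mult_ac)
      finally show ?thesis using \<open>\<epsilon> * (n0 + 2) = a / 4\<close> by simp
    qed
    moreover have "Dr (y - \<zeta>) \<le> 2 * (s * (e * L)) - s * a"
      unfolding a_def using linear_bound_in_cone[OF \<open>linear Dr\<close> L _ \<open>s > 0\<close> y \<zeta>(2)] \<open>L > 0\<close> by simp
    moreover have "s * (e * L) \<le> s * (a / 8)" using e(4) \<open>s > 0\<close> by (intro mult_left_mono) auto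
    moreover have "r i \<zeta> \<le> 0" using r_nonpos_on_frontier[OF \<zeta>(1) i] .
    moreover have "s * a > 0" using \<open>s > 0\<close> \<open>a > 0\<close> by simp
    ultimately show ?thesis by linarith
  qed
  then show ?thesis using e(1) unfolding cone_inside_def by blast
qed

lemma cone_inside_all:
  assumes "\<zeta>0 \<in> frontier D"
  obtains e where "e > 0" "\<And>i. i < N \<Longrightarrow> cone_inside i \<zeta>0 e"
proof -
  have "\<forall>\<^sub>F e in at_right 0. cone_inside i \<zeta>0 e" if i: "i < N" for i
  proof -
    obtain e where "e > 0" "cone_inside i \<zeta>0 e"
      using cone_inside_active[OF i assms] cone_inside_inactive[OF i assms] by blast
    then show ?thesis
      unfolding eventually_at_right_field using cone_inside_mono by (metis less_le)
  qed
  then have "\<forall>\<^sub>F e in at_right 0. \<forall>i\<in>{..<N}. cone_inside i \<zeta>0 e"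
    by (intro eventually_ball_finite) auto
  then obtain b where "b > 0" "\<And>e. 0 < e \<Longrightarrow> e < b \<Longrightarrow> \<forall>i<N. cone_inside i \<zeta>0 e"
    unfolding eventually_at_right_field by auto
  then show thesis using that[of "b / 2"] by simp
qed

text \<open>Compactness of \<open>bD\<close> makes the cones uniform.\<close>
lemma uniform_cone:
  obtains e where "e > 0"
    "\<And>\<zeta> s. \<zeta> \<in> frontier D \<Longrightarrow> s \<in> {0<..e} \<Longrightarrow> ball ((1 - s) *\<^sub>R \<zeta>) (e * s) \<subseteq> D"
proof -
  have "\<forall>\<zeta>0\<in>frontier D. \<exists>e. e > 0 \<and> (\<forall>i<N. cone_inside i \<zeta>0 e)"
    using cone_inside_all by (metis (no_types))
  from bchoice[OF this] obtain E
    where E: "\<forall>\<zeta>0\<in>frontier D. E \<zeta>0 > 0 \<and> (\<forall>i<N. cone_inside i \<zeta>0 (E \<zeta>0))"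
    by (elim exE)
  have "compact (frontier D)" using bounded_D by (rule compact_frontier_bounded)
  moreover have "frontier D \<subseteq> (\<Union>\<zeta>0\<in>frontier D. ball \<zeta>0 (E \<zeta>0))" using E by force
  ultimately obtain C where C: "C \<subseteq> frontier D" "finite C" "frontier D \<subseteq> (\<Union>\<zeta>0\<in>C. ball \<zeta>0 (E \<zeta>0))"
    by (elim compactE_image) auto
  define e where "e = Min (insert 1 (E ` C))"
  have "e > 0" unfolding e_def using C E by (subst Min_gr_iff) auto
  have e_le: "e \<le> E \<zeta>0" if "\<zeta>0 \<in> C" for \<zeta>0 unfolding e_def using C that by (intro Min_le) auto
  have "ball ((1 - s) *\<^sub>R \<zeta>) (e * s) \<subseteq> D" if \<zeta>: "\<zeta> \<in> frontier D" and s: "s \<in> {0<..e}" for \<zeta> s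
  proof -
    obtain \<zeta>0 where "\<zeta>0 \<in> C" "dist \<zeta> \<zeta>0 < E \<zeta>0" using C(3) \<zeta> by (force simp: dist_commute)
    then have cone: "cone_inside i \<zeta>0 (E \<zeta>0)" if "i < N" for i using E C(1) \<open>i < N\<close> by blast
    have "s \<in> {0<..E \<zeta>0}" "e * s \<le> E \<zeta>0 * s"
      using s e_le[OF \<open>\<zeta>0 \<in> C\<close>] by (auto intro: mult_right_mono)
    show ?thesis
    proof
      fix y assume "y \<in> ball ((1 - s) *\<^sub>R \<zeta>) (e * s)"
      then have "y \<in> ball ((1 - s) *\<^sub>R \<zeta>) (E \<zeta>0 * s)" using \<open>e * s \<le> E \<zeta>0 * s\<close> by simp
      then have "r i y < 0" if "i < N" for i
        using cone[OF that] \<zeta> \<open>dist \<zeta> \<zeta>0 < E \<zeta>0\<close> \<open>s \<in> {0<..E \<zeta>0}\<close>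
        unfolding cone_inside_def by blast
      then show "y \<in> D" by (simp add: mem_D_iff)
    qed
  qed
  then show thesis using that \<open>e > 0\<close> by blast
qed

lemma uniform_radial_ball:
  obtains c where "c > 0"
    "\<And>\<zeta> s. \<zeta> \<in> frontier D \<Longrightarrow> s \<in> {0<..<1} \<Longrightarrow> ball ((1 - s) *\<^sub>R \<zeta>) (c * s) \<subseteq> D"
proof (cases "D = {}")
  case True
  then show thesis using that[of 1] by simp
next
  case False
  then have "0 \<in> D" using starlike[of _ 0] by fastforce
  then obtain r0 where "r0 > 0" "ball 0 r0 \<subseteq> D" using open_D open_contains_ball by blast
  obtain R where "R > 0" and R: "\<And>z. z \<in> closure D \<Longrightarrow> norm z \<le> R"
    using bounded_closure[OF bounded_D] bounded_pos by blast
  obtain e0 where "e0 > 0" and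
    cone: "\<And>\<zeta> s. \<zeta> \<in> frontier D \<Longrightarrow> s \<in> {0<..e0} \<Longrightarrow> ball ((1 - s) *\<^sub>R \<zeta>) (e0 * s) \<subseteq> D"
    using uniform_cone by blast
  define e where "e = min e0 (1 / 2)"
  have e: "0 < e" "e \<le> e0" "e < 1" using \<open>e0 > 0\<close> by (auto simp: e_def)
  define m where "m = r0 * (e * e) / (e * e + R)"
  define c where "c = min e m"
  have "m > 0" using e \<open>r0 > 0\<close> \<open>R > 0\<close> unfolding m_def by (intro divide_pos_pos) (auto intro: add_pos_pos)
  then have "c > 0" using e by (simp add: c_def)
  have "ball ((1 - s) *\<^sub>R \<zeta>) (c * s) \<subseteq> D" if \<zeta>: "\<zeta> \<in> frontier D" and s: "s \<in> {0<..<1}" for \<zeta> s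
  proof (cases "s \<le> e")
    case True
    have "c * s \<le> e0 * s" using s e by (intro mult_right_mono) (auto simp: c_def)
    moreover have "s \<in> {0<..e0}" using True s e by auto
    ultimately show ?thesis using cone[OF \<zeta>] by (meson subset_ball order_trans)
  next
    case False
    define x where "x = (1 - e) *\<^sub>R \<zeta>"
    have "ball x (e * e) \<subseteq> D"
    proof -
      have "e * e \<le> e0 * e" using e by (intro mult_right_mono) auto
      moreover have "e \<in> {0<..e0}" using e by auto
      ultimately show ?thesis using cone[OF \<zeta>] unfolding x_def by (meson subset_ball order_trans)
    qed
    moreover have "norm x \<le> R"
      using R[OF starlike_closure[of \<zeta> "1 - e"]] \<zeta> e unfolding x_def by (simp add: frontier_D_eq)
    moreover have "(1 - s) *\<^sub>R \<zeta> = ((1 - s) / (1 - e)) *\<^sub>R x" using e by (simp add: x_def)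
    moreover have "0 < (1 - s) / (1 - e)" "(1 - s) / (1 - e) \<le> 1" using s e False by auto
    ultimately have "ball ((1 - s) *\<^sub>R \<zeta>) m \<subseteq> D"
      using starlike_ball_segment[OF starlike \<open>ball 0 r0 \<subseteq> D\<close>] e \<open>R > 0\<close>
      unfolding m_def by (metis less_imp_le mult_pos_pos)
    moreover have "c * s \<le> m" using s \<open>c > 0\<close> by (smt (verit) c_def greaterThanLessThan_iff mult_left_le)
    ultimately show ?thesis by (meson subset_ball order_trans)
  qed
  then show thesis using that \<open>c > 0\<close> by blast
qed

lemma radial_segment_in_D: "\<zeta> \<in> frontier D \<Longrightarrow> s \<in> {0<..<1} \<Longrightarrow> (1 - s) *\<^sub>R \<zeta> \<in> D"
  by (metis uniform_radial_ball centre_in_ball greaterThanLessThan_iff mult_pos_pos subsetD)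

lemma radial_boundary_point:
  assumes w: "w \<in> D" "w \<noteq> 0"
  obtains t where "t > 1" "t *\<^sub>R w \<in> frontier D" "radial_bdist D w = norm (t *\<^sub>R w - w)"
proof -
  obtain R where "R > 0" and R: "\<And>z. z \<in> D \<Longrightarrow> norm z \<le> R"
    using bounded_D bounded_pos by blast
  define T where "T = R / norm w + 1"
  have "T \<ge> 1" using \<open>R > 0\<close> by (simp add: T_def)
  have "norm (T *\<^sub>R w) > R" using w(2) \<open>R > 0\<close> by (simp add: T_def field_simps)
  then have "T *\<^sub>R w \<notin> D" using R by force
  moreover have "connected ((\<lambda>t. t *\<^sub>R w) ` {1..T})"
    by (intro connected_continuous_image continuous_intros) auto
  ultimately have "(\<lambda>t. t *\<^sub>R w) ` {1..T} \<inter> frontier D \<noteq> {}"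
    using connected_Int_frontier w(1) \<open>T \<ge> 1\<close> by (smt (verit) Diff_iff atLeastAtMost_iff empty_iff
      image_eqI disjoint_iff scaleR_one)
  then obtain t where "t \<ge> 1" "t *\<^sub>R w \<in> frontier D" by auto
  then have "t > 1" using w(1) by (cases "t = 1") (auto simp: frontier_D_eq)
  have unique: "t' = t" if "t' > 0" "t' *\<^sub>R w \<in> frontier D" for t'
  proof (rule ccontr)
    text \<open>Of two boundary points on the ray, the nearer one lies on the radial segment of the
      other, hence in \<open>D\<close>.\<close>
    have "t1 *\<^sub>R w \<in> D" if "0 < t1" "t1 < t2" "t2 *\<^sub>R w \<in> frontier D" for t1 t2
      using radial_segment_in_D[OF that(3), of "1 - t1 / t2"] that by (simp add: field_simps)
    moreover assume "t' \<noteq> t"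
    ultimately show False
      using that \<open>t > 1\<close> \<open>t *\<^sub>R w \<in> frontier D\<close>
      by (metis frontier_D_eq DiffD2 linorder_neqE_linordered_idom less_trans zero_less_one)
  qed
  have "(THE z. z \<in> frontier D \<and> (\<exists>t>0. z = t *\<^sub>R w)) = t *\<^sub>R w"
  proof (rule the_equality)
    show "t *\<^sub>R w \<in> frontier D \<and> (\<exists>t'>0. t *\<^sub>R w = t' *\<^sub>R w)"
      using \<open>t > 1\<close> \<open>t *\<^sub>R w \<in> frontier D\<close> by (intro conjI exI[of _ t]) auto
  qed (use unique in blast)
  then show thesis using that \<open>t > 1\<close> \<open>t *\<^sub>R w \<in> frontier D\<close> by (simp add: radial_bdist_def)
qed

lemma radial_bdist_le_bdist:
  "\<exists>C>1. \<forall>w\<in>D. w \<noteq> 0 \<longrightarrow> radial_bdist D w \<le> C * bdist D w"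
proof -
  obtain c where "c > 0" and
    c: "\<And>\<zeta> s. \<zeta> \<in> frontier D \<Longrightarrow> s \<in> {0<..<1} \<Longrightarrow> ball ((1 - s) *\<^sub>R \<zeta>) (c * s) \<subseteq> D"
    using uniform_radial_ball by blast
  obtain R where "R > 0" and R: "\<And>z. z \<in> closure D \<Longrightarrow> norm z \<le> R"
    using bounded_closure[OF bounded_D] bounded_pos by blast
  define C where "C = max 2 (R / c)"
  have "radial_bdist D w \<le> C * bdist D w" if w: "w \<in> D" "w \<noteq> 0" for w
  proof -
    obtain t where "t > 1" and \<zeta>: "t *\<^sub>R w \<in> frontier D"
      and \<rho>: "radial_bdist D w = norm (t *\<^sub>R w - w)"
      using radial_boundary_point[OF w] .
    define s where "s = 1 - 1 / t"
    have s: "s \<in> {0<..<1}" using \<open>t > 1\<close> by (simp add: s_def)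
    have "w = (1 - s) *\<^sub>R (t *\<^sub>R w)" using \<open>t > 1\<close> by (simp add: s_def)
    then have "c * s \<le> bdist D w"
      unfolding bdist_def using c[OF \<zeta> s] \<zeta> by (metis ball_subset_imp_le_infdist_frontier empty_iff)
    have "t *\<^sub>R w - w = (t - 1) *\<^sub>R w" by (simp add: algebra_simps)
    then have "radial_bdist D w = (t - 1) * norm w" using \<rho> \<open>t > 1\<close> by simp
    also have "\<dots> = s * norm (t *\<^sub>R w)" using \<open>t > 1\<close> by (simp add: s_def field_simps)
    also have "\<dots> \<le> s * R"
      using R[of "t *\<^sub>R w"] \<zeta> s by (intro mult_left_mono) (auto simp: frontier_D_eq)
    also have "\<dots> = R / c * (c * s)" using \<open>c > 0\<close> by simp
    also have "\<dots> \<le> R / c * bdist D w"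
      using \<open>c * s \<le> bdist D w\<close> \<open>c > 0\<close> \<open>R > 0\<close> by (intro mult_left_mono) auto
    also have "\<dots> \<le> C * bdist D w"
      by (intro mult_right_mono) (auto simp: C_def bdist_def infdist_nonneg)
    finally show ?thesis .
  qed
  then show ?thesis by (intro exI[of _ C]) (auto simp: C_def)
qed

end

lemma complete_circular_imp_starlike:
  assumes "complete_circular D" "z \<in> D" "0 \<le> t" "t \<le> 1"
  shows "t *\<^sub>R z \<in> D"
proof -
  have "complex_of_real t *s z \<in> D"
    using assms unfolding complete_circular_def by simp
  moreover have "(complex_of_real t *s z) $ i = (t *\<^sub>R z) $ i" for i
    using scaleR_conv_of_real[of t "z $ i"] by simp
  then have "complex_of_real t *s z = t *\<^sub>R z" by (simp add: vec_eq_iff)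
  ultimately show ?thesis by simp
qed

theorem lemma3p4:
  fixes D :: "(complex ^ 'n) set" and N :: nat
    and Ds :: "nat \<Rightarrow> (complex ^ 'n) set" and r :: "nat \<Rightarrow> complex ^ 'n \<Rightarrow> real"
  assumes pw: "piecewise_smooth_domain D N Ds r"
    and circ: "complete_circular D"
    and transv: "\<And>\<zeta> F j. \<zeta> \<in> frontier D \<Longrightarrow> is_face D N Ds F \<Longrightarrow> \<zeta> \<in> closure F
                   \<Longrightarrow> j < N \<Longrightarrow> F \<subseteq> frontier (Ds j)
                   \<Longrightarrow> frechet_derivative (r j) (at \<zeta>) \<zeta> \<noteq> 0"
  shows "\<exists>C>1. \<forall>w\<in>D. w \<noteq> 0 \<longrightarrow> radial_bdist D w \<le> C * bdist D w"
proof -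
  interpret radially_transverse_domain D N Ds r
    using pw complete_circular_imp_starlike[OF circ] transv
    by unfold_locales (auto simp: pw_smooth_domain_def)
  show ?thesis by (rule radial_bdist_le_bdist)
qed

end
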